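(* Let $X$ and $B$ be real Banach spaces. Assume that $f:X\rightarrow B$ is a $C^{1}$ mapping (continuously Fréchet differentiable), that $\eta:B\rightarrow \mathbb{R}_{+}$ is a $C^{1}$ functional, and that the following conditions hold: (c1) for $x\in B$, $\eta(x)=0$ if and only if $x=0$, and $\eta'(x)=0$ if and only if $x=0$; (c2) for every $y\in B$ the functional $\varphi:X\rightarrow\mathbb{R}$, $\varphi(x)=\eta(f(x)-y)$, satisfies the Palais–Smale condition; (c3) for every $x\in X$ the Fréchet derivative $f'(x)$ is surjective, i.e. $f'(x)X=B$, and there exists a constant $\alpha_x>0$ such that $\|f'(x)h\|\geq \alpha_x\|h\|$ for all $h\in X$; (c4) there exist positive constants $\alpha$, $c$, $M$ such that $\eta(x)\geq c\|x\|^{\alpha}$ for all $x\in B$ with $\|x\|\leq M$. Then $f$ is a diffeomorphism.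
   Context: A map $f:X\rightarrow B$ between Banach spaces is a diffeomorphism if it is a continuously Fréchet differentiable bijection whose inverse $f^{-1}:B\rightarrow X$ is also continuously Fréchet differentiable. A functional $J:X\rightarrow\mathbb{R}$ of class $C^1$ satisfies the Palais–Smale condition if every sequence $(u_n)$ in $X$ such that $(J(u_n))$ is bounded and $J'(u_n)\rightarrow 0$ has a convergent subsequence. *)

theory Defs
  imports "HOL-Analysis.Analysis"
begin

definition C1_map :: "('a::real_normed_vector \<Rightarrow> 'b::real_normed_vector) \<Rightarrow> bool" where
  "C1_map f \<longleftrightarrow> (\<exists>f' :: 'a \<Rightarrow> ('a \<Rightarrow>\<^sub>L 'b).
      (\<forall>x. (f has_derivative blinfun_apply (f' x)) (at x)) \<and> continuous_on UNIV f')"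

definition diffeomorphism :: "('a::real_normed_vector \<Rightarrow> 'b::real_normed_vector) \<Rightarrow> bool" where
  "diffeomorphism f \<longleftrightarrow> bij f \<and> C1_map f \<and> C1_map (inv f)"

text \<open>Palais--Smale condition for a (C1) functional J; J' ranges over its
  Frechet derivative (which is unique).\<close>
definition palais_smale :: "('a::real_normed_vector \<Rightarrow> real) \<Rightarrow> bool" where
  "palais_smale J \<longleftrightarrow> (\<forall>(J' :: 'a \<Rightarrow> ('a \<Rightarrow>\<^sub>L real)) (u :: nat \<Rightarrow> 'a).
      (\<forall>x. (J has_derivative blinfun_apply (J' x)) (at x)) \<longrightarrow>
      bounded (range (\<lambda>n. J (u n))) \<longrightarrow> (\<lambda>n. J' (u n)) \<longlonglongrightarrow> 0 \<longrightarrow>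
      (\<exists>r. strict_mono r \<and> convergent (u \<circ> r)))"

end

theory Submission
  imports Defs
begin

text \<open>
  By (c3) every derivative f'(x) is an isomorphism, so the inverse function theorem (proved by
  the contraction mapping principle) makes f a local homeomorphism. If f(x_n) converges to y,
  then x_n is a minimising sequence of the nonnegative functional \<phi> = \<eta>(f - y), and Ekeland's
  variational principle moves it by a vanishing amount onto a Palais--Smale sequence of \<phi>; by
  (c2) the latter has a convergent subsequence, hence so has x_n, i.e. f is proper. A proper local
  homeomorphism onto B is a covering map, and since B is simply connected, lifting the identity
  of B gives a continuous global inverse. It is C1 because inversion of bounded operators is
  continuous.
\<close>

section \<open>Inverses of bounded operators and of C1 maps\<close>

lemma blinfun_inverse_of_bounded_below:
  fixes A :: "'a::real_normed_vector \<Rightarrow>\<^sub>L 'b::real_normed_vector"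
  assumes surj: "range (blinfun_apply A) = UNIV"
    and a: "a > 0" and below: "\<And>h. a * norm h \<le> norm (A h)"
  obtains L :: "'b \<Rightarrow>\<^sub>L 'a" where "\<And>h. L (A h) = h" "\<And>k. A (L k) = k"
proof -
  have "inj (blinfun_apply A)"
  proof (rule injI)
    fix x y assume "A x = A y"
    then have "a * norm (x - y) \<le> 0" using below[of "x - y"] by (simp add: blinfun.diff_right)
    then show "x = y" using a by (simp add: mult_le_0_iff)
  qed
  define g where "g = inv (blinfun_apply A)"
  have Ag: "A (g k) = k" for k
    using surj unfolding g_def by (metis f_inv_into_f UNIV_I)
  have gA: "g (A h) = h" for h
    using \<open>inj (blinfun_apply A)\<close> unfolding g_def by simp
  have "bounded_linear g"
  proof (rule bounded_linear_intro[where K = "1/a"])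
    show "g (x + y) = g x + g y" for x y by (metis Ag blinfun.add_right gA)
    show "g (r *\<^sub>R x) = r *\<^sub>R g x" for r x by (metis Ag blinfun.scaleR_right gA)
    show "norm (g x) \<le> norm x * (1/a)" for x
      using below[of "g x"] a by (simp add: Ag field_simps)
  qed
  then show ?thesis
    using that[of "Blinfun g"] Ag gA by (simp add: bounded_linear_Blinfun_apply)
qed

lemma norm_blinfun_right_inverse_le:
  fixes A B :: "'a::real_normed_vector \<Rightarrow>\<^sub>L 'b::real_normed_vector" and L M :: "'b \<Rightarrow>\<^sub>L 'a"
  assumes LA: "\<And>h. L (A h) = h" and BM: "\<And>k. B (M k) = k"
    and close: "norm L * norm (A - B) \<le> 1/2"
  shows "norm (M k) \<le> 2 * norm L * norm k"
proof -
  have "M k = L (k + (A - B) (M k))"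
    using LA[of "M k"] by (simp add: blinfun.diff_left BM)
  then have "norm (M k) \<le> norm L * norm (k + (A - B) (M k))"
    by (metis norm_blinfun)
  also have "\<dots> \<le> norm L * (norm k + norm (A - B) * norm (M k))"
    by (intro mult_left_mono order_trans[OF norm_triangle_ineq] add_left_mono norm_blinfun) simp_all
  also have "\<dots> \<le> norm L * norm k + 1/2 * norm (M k)"
    using mult_right_mono[OF close norm_ge_zero[of "M k"]] by (simp add: distrib_left mult.assoc)
  finally show ?thesis by simp
qed

lemma norm_blinfun_inverse_diff_le:
  fixes A B :: "'a::real_normed_vector \<Rightarrow>\<^sub>L 'b::real_normed_vector" and L M :: "'b \<Rightarrow>\<^sub>L 'a"
  assumes LA: "\<And>h. L (A h) = h" and AL: "\<And>k. A (L k) = k"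
    and MB: "\<And>h. M (B h) = h" and BM: "\<And>k. B (M k) = k"
    and close: "norm L * norm (A - B) \<le> 1/2"
  shows "norm (M - L) \<le> 2 * (norm L)\<^sup>2 * norm (A - B)"
proof (rule norm_blinfun_bound)
  show "0 \<le> 2 * (norm L)\<^sup>2 * norm (A - B)" by simp
  fix k
  have "(M - L) k = M ((A - B) (L k))"
    by (simp add: blinfun.diff_left blinfun.diff_right AL MB)
  also have "norm \<dots> \<le> 2 * norm L * norm ((A - B) (L k))"
    by (rule norm_blinfun_right_inverse_le[OF LA BM close])
  also have "\<dots> \<le> 2 * norm L * (norm (A - B) * (norm L * norm k))"
    by (intro mult_left_mono order_trans[OF norm_blinfun] norm_blinfun) simp_all
  finally show "norm ((M - L) k) \<le> 2 * (norm L)\<^sup>2 * norm (A - B) * norm k"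
    by (simp add: power2_eq_square mult_ac)
qed

lemma continuous_on_blinfun_inverse:
  fixes A :: "'c::metric_space \<Rightarrow> ('a::real_normed_vector \<Rightarrow>\<^sub>L 'b::real_normed_vector)"
    and L :: "'c \<Rightarrow> ('b \<Rightarrow>\<^sub>L 'a)"
  assumes contA: "continuous_on S A"
    and LA: "\<And>x h. x \<in> S \<Longrightarrow> L x (A x h) = h" and AL: "\<And>x k. x \<in> S \<Longrightarrow> A x (L x k) = k"
  shows "continuous_on S L"
  unfolding continuous_on_iff
proof (intro ballI allI impI)
  fix x e assume "x \<in> S" "0 < (e::real)"
  define c where "c = norm (L x) + 1"
  have "c > 0" by (simp add: c_def add_nonneg_pos)
  define \<epsilon> where "\<epsilon> = min (1 / (2 * c)) (e / (2 * c\<^sup>2))"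
  have "\<epsilon> > 0" using \<open>c > 0\<close> \<open>e > 0\<close> by (simp add: \<epsilon>_def)
  then obtain d where "d > 0" and d: "\<And>z. z \<in> S \<Longrightarrow> dist z x < d \<Longrightarrow> dist (A z) (A x) < \<epsilon>"
    using contA \<open>x \<in> S\<close> unfolding continuous_on_iff by metis
  show "\<exists>d>0. \<forall>z\<in>S. dist z x < d \<longrightarrow> dist (L z) (L x) < e"
  proof (intro exI conjI ballI impI)
    fix z assume "z \<in> S" "dist z x < d"
    then have "norm (A z - A x) < \<epsilon>" using d by (simp add: dist_norm)
    then have Az: "norm (A x - A z) < \<epsilon>" by (metis norm_minus_commute)
    have "norm (L x) * norm (A x - A z) \<le> c * (1 / (2 * c))"
      using Az by (intro mult_mono) (auto simp: c_def \<epsilon>_def)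
    also have "\<dots> = 1/2" using \<open>c > 0\<close> by simp
    finally have half: "norm (L x) * norm (A x - A z) \<le> 1/2" .
    have "norm (L z - L x) \<le> 2 * (norm (L x))\<^sup>2 * norm (A x - A z)"
      by (rule norm_blinfun_inverse_diff_le[OF _ _ _ _ half]) (simp_all add: LA AL \<open>x \<in> S\<close> \<open>z \<in> S\<close>)
    also have "\<dots> \<le> 2 * c\<^sup>2 * norm (A x - A z)"
      by (intro mult_right_mono power_mono) (simp_all add: c_def)
    also have "\<dots> < 2 * c\<^sup>2 * (e / (2 * c\<^sup>2))"
      using Az \<open>c > 0\<close> by (intro mult_strict_left_mono) (auto simp: \<epsilon>_def)
    also have "\<dots> = e" using \<open>c > 0\<close> by simp
    finally show "dist (L z) (L x) < e" by (simp add: dist_norm)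
  qed (rule \<open>d > 0\<close>)
qed

lemma C1_map_inverse:
  fixes f :: "'a::real_normed_vector \<Rightarrow> 'b::real_normed_vector" and L :: "'a \<Rightarrow> ('b \<Rightarrow>\<^sub>L 'a)"
  assumes f_deriv: "\<And>x. (f has_derivative blinfun_apply (f' x)) (at x)"
    and f'_cont: "continuous_on UNIV f'"
    and LA: "\<And>x h. L x (f' x h) = h" and AL: "\<And>x k. f' x (L x k) = k"
    and g_cont: "continuous_on UNIV g" and fg: "\<And>y. f (g y) = y"
  shows "C1_map g"
  unfolding C1_map_def
proof (intro exI conjI allI)
  have "continuous_on UNIV L" by (rule continuous_on_blinfun_inverse[OF f'_cont LA AL])
  then show "continuous_on UNIV (\<lambda>y. L (g y))"
    using continuous_on_compose2 g_cont by blast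
  show "(g has_derivative blinfun_apply (L (g y))) (at y)" for y
  proof (rule has_derivative_inverse_basic[OF f_deriv, where T = UNIV])
    show "blinfun_apply (L (g y)) \<circ> blinfun_apply (f' (g y)) = id" by (rule ext) (simp add: LA)
    show "continuous (at y) g" using g_cont by (simp add: continuous_on_eq_continuous_at)
  qed (auto simp: fg blinfun.bounded_linear_right)
qed

section \<open>The local inverse function theorem\<close>

lemma linearization_contraction:
  fixes f :: "'a::real_normed_vector \<Rightarrow> 'b::real_normed_vector" and L :: "'b \<Rightarrow>\<^sub>L 'a"
  assumes "convex S"
    and derf: "\<And>x. x \<in> S \<Longrightarrow> (f has_derivative blinfun_apply (A x)) (at x within S)"
    and LA: "\<And>h. L (A a h) = h"
    and close: "\<And>x. x \<in> S \<Longrightarrow> norm L * norm (A x - A a) \<le> 1/2"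
    and "a \<in> S" "x \<in> S" "y \<in> S"
  shows "norm ((x - y) - L (f x - f y)) \<le> 1/2 * norm (x - y)"
proof (cases "L = 0")
  case True
  then show ?thesis using LA[of "x - y"] by simp
next
  case False
  then have "norm L > 0" by simp
  have "norm (f x - f y - A a (x - y)) \<le> norm (x - y) * (1 / (2 * norm L))"
  proof (rule differentiable_bound_linearization[where S = S and f' = "\<lambda>x. blinfun_apply (A x)" and a = y and b = x])
    show "y + t *\<^sub>R (x - y) \<in> S" if "t \<in> {0..1}" for t
      using convexD_alt[OF \<open>convex S\<close> \<open>y \<in> S\<close> \<open>x \<in> S\<close>, of t] that
      by (simp add: algebra_simps)
    show "onorm (blinfun_apply (A x) - blinfun_apply (A a)) \<le> 1 / (2 * norm L)" if "x \<in> S" for x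
    proof -
      have "onorm (blinfun_apply (A x) - blinfun_apply (A a)) = norm (A x - A a)"
        by (simp add: norm_blinfun.rep_eq minus_blinfun.rep_eq fun_diff_def)
      then show ?thesis using close[OF that] \<open>norm L > 0\<close> by (simp add: field_simps)
    qed
  qed (use derf \<open>a \<in> S\<close> in auto)
  then have "norm L * norm (f x - f y - A a (x - y)) \<le> norm L * (norm (x - y) * (1 / (2 * norm L)))"
    by (rule mult_left_mono) simp_all
  moreover have "(x - y) - L (f x - f y) = - L (f x - f y - A a (x - y))"
    by (simp add: LA blinfun.diff_right)
  then have "norm ((x - y) - L (f x - f y)) \<le> norm L * norm (f x - f y - A a (x - y))"
    by (simp add: norm_blinfun)
  ultimately show ?thesis
    using \<open>norm L > 0\<close> by simp
qed

lemma homeomorphism_inv_into_of_expanding: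
  fixes f :: "'a::metric_space \<Rightarrow> 'b::metric_space"
  assumes contf: "continuous_on S f"
    and expand: "\<And>x y. x \<in> S \<Longrightarrow> y \<in> S \<Longrightarrow> dist x y \<le> C * dist (f x) (f y)"
  shows "homeomorphism S (f ` S) f (inv_into S f)"
proof -
  have inj: "inj_on f S"
    by (rule inj_onI) (use expand in fastforce)
  have "\<bar>C\<bar>-lipschitz_on (f ` S) (inv_into S f)"
  proof (rule lipschitz_onI)
    fix u v assume "u \<in> f ` S" "v \<in> f ` S"
    then have "dist (inv_into S f u) (inv_into S f v) \<le> C * dist u v"
      using expand[of "inv_into S f u" "inv_into S f v"] by (simp add: inv_into_into f_inv_into_f)
    also have "\<dots> \<le> \<bar>C\<bar> * dist u v" by (simp add: mult_right_mono)
    finally show "dist (inv_into S f u) (inv_into S f v) \<le> \<bar>C\<bar> * dist u v" .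
  qed simp
  then show ?thesis
    using inj contf
    by (intro homeomorphismI) (auto simp: lipschitz_on_continuous_on inv_into_into f_inv_into_f)
qed

lemma exists_preimage_by_contraction:
  fixes f :: "'a::banach \<Rightarrow> 'b::real_normed_vector"
    and L :: "'b \<Rightarrow>\<^sub>L 'a" and A :: "'a \<Rightarrow>\<^sub>L 'b"
  assumes contraction: "\<And>x z. x \<in> cball a \<delta> \<Longrightarrow> z \<in> cball a \<delta> \<Longrightarrow>
      norm ((x - z) - L (f x - f z)) \<le> 1/2 * norm (x - z)"
    and AL: "\<And>k. A (L k) = k"
    and y: "norm (L (y - f a)) < \<delta>/2"
  shows "\<exists>x \<in> ball a \<delta>. f x = y"
proof -
  have "0 < \<delta>" using y norm_ge_zero[of "L (y - f a)"] by linarith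
  define u where "u x = x + L (y - f x)" for x
  have u_diff: "u x - u z = (x - z) - L (f x - f z)" for x z
    by (simp add: u_def blinfun.diff_right algebra_simps)
  have u_into: "u x \<in> ball a \<delta>" if "x \<in> cball a \<delta>" for x
  proof -
    have "norm (u x - u a) \<le> \<delta>/2"
      using contraction[OF that, of a] \<open>0 < \<delta>\<close> that by (simp add: u_diff dist_norm norm_minus_commute)
    moreover have "norm (u a - a) < \<delta>/2" using y by (simp add: u_def)
    moreover have "norm (u x - a) \<le> norm (u x - u a) + norm (u a - a)"
      using norm_triangle_ineq[of "u x - u a" "u a - a"] by simp
    ultimately show ?thesis by (simp add: dist_norm norm_minus_commute)
  qed
  have "\<exists>!x \<in> cball a \<delta>. u x = x"
  proof (rule Banach_fix[where c = "1/2"])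
    show "u ` cball a \<delta> \<subseteq> cball a \<delta>" using u_into by force
    show "dist (u x) (u z) \<le> 1/2 * dist x z" if "x \<in> cball a \<delta>" "z \<in> cball a \<delta>" for x z
      using contraction[OF that] by (simp add: dist_norm u_diff)
    show "cball a \<delta> \<noteq> {}" using \<open>0 < \<delta>\<close> by auto
  qed (auto simp: complete_eq_closed)
  then obtain x where x: "x \<in> cball a \<delta>" "u x = x" by blast
  then have "L (y - f x) = 0" by (simp add: u_def)
  then have "f x = y" using AL[of "y - f x"] by (simp add: blinfun.zero_right)
  then show ?thesis using u_into[OF x(1)] x(2) by auto
qed

lemma local_inverse_near_invertible_derivative:
  fixes f :: "'a::banach \<Rightarrow> 'b::real_normed_vector" and L :: "'b \<Rightarrow>\<^sub>L 'a"
  assumes derf: "\<And>x. (f has_derivative blinfun_apply (f' x)) (at x)"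
    and LA: "\<And>h. L (f' x0 h) = h" and AL: "\<And>k. f' x0 (L k) = k"
    and "\<delta> > 0" and close: "\<And>x. x \<in> cball x0 \<delta> \<Longrightarrow> norm L * norm (f' x - f' x0) \<le> 1/2"
  obtains U V g where "open U" "x0 \<in> U" "U \<subseteq> ball x0 \<delta>" "open V" "homeomorphism U V f g"
proof -
  let ?D = "cball x0 \<delta>"
  have contraction: "norm ((x - y) - L (f x - f y)) \<le> 1/2 * norm (x - y)"
    if "x \<in> ?D" "y \<in> ?D" for x y
  proof (rule linearization_contraction[where S = ?D and A = f' and a = x0])
    show "(f has_derivative blinfun_apply (f' x)) (at x within ?D)" for x
      by (rule has_derivative_at_withinI[OF derf])
  qed (use \<open>\<delta> > 0\<close> that LA close in auto)
  have expand: "dist x y \<le> (2 * norm L) * dist (f x) (f y)" if "x \<in> ?D" "y \<in> ?D" for x y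
  proof -
    have "norm (x - y) \<le> norm ((x - y) - L (f x - f y)) + norm (L (f x - f y))"
      using norm_triangle_ineq[of "(x - y) - L (f x - f y)" "L (f x - f y)"] by simp
    also have "\<dots> \<le> 1/2 * norm (x - y) + norm L * norm (f x - f y)"
      using contraction[OF that] norm_blinfun[of L] by (intro add_mono) auto
    finally show ?thesis by (simp add: dist_norm)
  qed
  have contf: "continuous_on UNIV f"
    using derf by (meson continuous_at_imp_continuous_on has_derivative_continuous)
  have hom: "homeomorphism ?D (f ` ?D) f (inv_into ?D f)"
    using contf expand by (intro homeomorphism_inv_into_of_expanding) (auto intro: continuous_on_subset)
  define V where "V = {y. norm (L (y - f x0)) < \<delta>/2}"
  define U where "U = ball x0 \<delta> \<inter> f -` V"
  have "open V" unfolding V_def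
    by (intro open_Collect_less continuous_intros) (auto intro: continuous_intros simp: blinfun.bounded_linear_right)
  moreover have "open U" unfolding U_def using \<open>open V\<close> contf by (simp add: open_Int open_vimage)
  moreover have "x0 \<in> U" using \<open>\<delta> > 0\<close> by (simp add: U_def V_def)
  moreover have "U \<subseteq> ball x0 \<delta>" by (auto simp: U_def)
  moreover have "f ` U = V"
  proof
    show "V \<subseteq> f ` U"
    proof
      fix y assume "y \<in> V"
      then obtain x where "x \<in> ball x0 \<delta>" "f x = y"
        using exists_preimage_by_contraction[where a = x0 and \<delta> = \<delta>, OF contraction AL] by (fastforce simp: V_def)
      then show "y \<in> f ` U" using \<open>y \<in> V\<close> by (auto simp: U_def)
    qed
  qed (auto simp: U_def)
  then have "homeomorphism U V f (inv_into ?D f)"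
    by (intro homeomorphism_of_subsets[OF hom]) (auto simp: U_def)
  ultimately show ?thesis using that by blast
qed

definition local_homeomorphism :: "('a::metric_space \<Rightarrow> 'b::topological_space) \<Rightarrow> bool" where
  "local_homeomorphism f \<longleftrightarrow>
    (\<forall>x r. 0 < r \<longrightarrow> (\<exists>U V g. open U \<and> x \<in> U \<and> U \<subseteq> ball x r \<and> open V \<and> homeomorphism U V f g))"

lemma local_homeomorphism_if_invertible_derivative:
  fixes f :: "'a::banach \<Rightarrow> 'b::real_normed_vector"
  assumes derf: "\<And>x. (f has_derivative blinfun_apply (f' x)) (at x)"
    and f'_cont: "continuous_on UNIV f'"
    and invertible: "\<And>x. \<exists>L :: 'b \<Rightarrow>\<^sub>L 'a. (\<forall>h. L (f' x h) = h) \<and> (\<forall>k. f' x (L k) = k)"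
  shows "local_homeomorphism f"
  unfolding local_homeomorphism_def
proof (intro allI impI)
  fix x0 :: 'a and r :: real assume "0 < r"
  obtain L :: "'b \<Rightarrow>\<^sub>L 'a" where LA: "\<And>h. L (f' x0 h) = h" and AL: "\<And>k. f' x0 (L k) = k"
    using invertible by blast
  define \<epsilon> where "\<epsilon> = 1 / (2 * (norm L + 1))"
  have "\<epsilon> > 0" by (simp add: \<epsilon>_def add_nonneg_pos)
  obtain d where "d > 0" and d: "\<And>x. dist x x0 < d \<Longrightarrow> dist (f' x) (f' x0) < \<epsilon>"
    using f'_cont \<open>\<epsilon> > 0\<close> unfolding continuous_on_iff by (metis UNIV_I)
  define \<delta> where "\<delta> = min (d/2) r"
  have "\<delta> > 0" using \<open>d > 0\<close> \<open>0 < r\<close> by (simp add: \<delta>_def)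
  have "norm L * norm (f' x - f' x0) \<le> 1/2" if "x \<in> cball x0 \<delta>" for x
  proof -
    have "norm (f' x - f' x0) < \<epsilon>"
      using d[of x] that \<open>d > 0\<close> by (simp add: \<delta>_def dist_norm norm_minus_commute)
    then have "norm L * norm (f' x - f' x0) \<le> (norm L + 1) * \<epsilon>"
      by (intro mult_mono) auto
    also have "\<dots> = 1/2" by (simp add: \<epsilon>_def add_nonneg_pos less_imp_neq[symmetric])
    finally show ?thesis .
  qed
  then obtain U V g where "open U" "x0 \<in> U" "U \<subseteq> ball x0 \<delta>" "open V" "homeomorphism U V f g"
    using local_inverse_near_invertible_derivative[OF derf LA AL \<open>\<delta> > 0\<close>] by metis
  moreover have "ball x0 \<delta> \<subseteq> ball x0 r" by (rule subset_ball) (simp add: \<delta>_def)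
  ultimately show "\<exists>U V g. open U \<and> x0 \<in> U \<and> U \<subseteq> ball x0 r \<and> open V \<and> homeomorphism U V f g"
    by blast
qed

section \<open>Ekeland's variational principle\<close>

lemma dist_cone_trans:
  fixes \<phi> :: "'a::metric_space \<Rightarrow> real"
  assumes "\<phi> v + k * dist v u \<le> \<phi> u" and "\<phi> w + k * dist w v \<le> \<phi> v" and "k \<ge> 0"
  shows "\<phi> w + k * dist w u \<le> \<phi> u"
proof -
  have "k * dist w u \<le> k * dist w v + k * dist v u"
    using dist_triangle[of w u v] \<open>k \<ge> 0\<close> by (simp add: distrib_left[symmetric] mult_left_mono)
  then show ?thesis using assms by linarith
qed

lemma ekeland_chain:
  fixes \<phi> :: "'a::metric_space \<Rightarrow> real"
  assumes bdd: "bdd_below (range \<phi>)" and "k > 0"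
  obtains xs where "xs 0 = x0"
    and "\<And>n. \<phi> (xs (Suc n)) + k * dist (xs (Suc n)) (xs n) \<le> \<phi> (xs n)"
    and "\<And>n w. \<phi> w + k * dist w (xs (Suc n)) \<le> \<phi> (xs (Suc n)) \<Longrightarrow> k * dist w (xs (Suc n)) \<le> (1/2)^n"
proof -
  define S where "S x = {w. \<phi> w + k * dist w x \<le> \<phi> x}" for x
  \<comment> \<open>each step is a 2^-n-almost minimiser of the current cone S x\<close>
  have "\<exists>w \<in> S x. \<phi> w \<le> Inf (\<phi> ` S x) + (1/2)^n" for x n
  proof -
    have "Inf (\<phi> ` S x) < Inf (\<phi> ` S x) + (1/2)^n" by simp
    moreover have "x \<in> S x" by (simp add: S_def)
    ultimately show ?thesis using cInf_lessD[of "\<phi> ` S x"] by (fastforce intro: less_imp_le)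
  qed
  then obtain nxt where nxt: "\<And>x n. nxt x n \<in> S x" "\<And>x n. \<phi> (nxt x n) \<le> Inf (\<phi> ` S x) + (1/2)^n"
    by metis
  define xs where "xs = rec_nat x0 (\<lambda>n x. nxt x n)"
  have xs_Suc: "xs (Suc n) = nxt (xs n) n" for n by (simp add: xs_def)
  show ?thesis
  proof
    show "xs 0 = x0" by (simp add: xs_def)
    show step: "\<phi> (xs (Suc n)) + k * dist (xs (Suc n)) (xs n) \<le> \<phi> (xs n)" for n
      using nxt(1) by (simp add: xs_Suc S_def)
    show "k * dist w (xs (Suc n)) \<le> (1/2)^n"
      if "\<phi> w + k * dist w (xs (Suc n)) \<le> \<phi> (xs (Suc n))" for n w
    proof -
      have "w \<in> S (xs n)"
        using dist_cone_trans[OF step that] \<open>k > 0\<close> by (simp add: S_def)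
      then have "Inf (\<phi> ` S (xs n)) \<le> \<phi> w"
        using bdd_below_mono[OF bdd, of "\<phi> ` S (xs n)"] by (simp add: image_mono cInf_lower)
      then show ?thesis using that nxt(2)[of "xs n" n] by (simp add: xs_Suc)
    qed
  qed
qed

lemma ekeland_variational_principle:
  fixes \<phi> :: "'a::complete_space \<Rightarrow> real"
  assumes cont: "continuous_on UNIV \<phi>" and bdd: "bdd_below (range \<phi>)" and "k > 0"
  obtains z where "\<phi> z + k * dist z x0 \<le> \<phi> x0" and "\<And>w. \<phi> z \<le> \<phi> w + k * dist w z"
proof -
  obtain xs where xs_0: "xs 0 = x0"
    and step: "\<And>n. \<phi> (xs (Suc n)) + k * dist (xs (Suc n)) (xs n) \<le> \<phi> (xs n)"
    and small: "\<And>n w. \<phi> w + k * dist w (xs (Suc n)) \<le> \<phi> (xs (Suc n)) \<Longrightarrow> k * dist w (xs (Suc n)) \<le> (1/2)^n"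
    using ekeland_chain[OF bdd \<open>k > 0\<close>] by blast
  define T where "T n = {w. \<phi> w + k * dist w (xs (Suc n)) \<le> \<phi> (xs (Suc n))}" for n
  have T_dec: "decseq T"
    by (rule decseq_SucI) (use dist_cone_trans[OF step] \<open>k > 0\<close> in \<open>auto simp: T_def\<close>)
  have T_diam: "k * dist w w' \<le> 2 * (1/2)^n" if "w \<in> T n" "w' \<in> T n" for w w' n
  proof -
    have "k * dist w w' \<le> k * (dist w (xs (Suc n)) + dist w' (xs (Suc n)))"
      using dist_triangle3[of w w' "xs (Suc n)"] \<open>k > 0\<close> by (intro mult_left_mono) (auto simp: dist_commute)
    moreover have "k * dist w (xs (Suc n)) \<le> (1/2)^n" "k * dist w' (xs (Suc n)) \<le> (1/2)^n"
      using small that by (simp_all add: T_def)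
    ultimately show ?thesis by (simp add: distrib_left)
  qed
  have "closed (T n)" for n
    unfolding T_def by (intro closed_Collect_le continuous_intros continuous_on_subset[OF cont]) auto
  moreover have "xs (Suc n) \<in> T n" for n by (simp add: T_def)
  then have "T n \<noteq> {}" for n by blast
  moreover have "\<exists>n. \<forall>w \<in> T n. \<forall>w' \<in> T n. dist w w' < \<epsilon>" if "\<epsilon> > 0" for \<epsilon>
  proof -
    obtain n where "(1/2::real)^n < \<epsilon> * k / 2"
      using real_arch_pow_inv[of "\<epsilon> * k / 2" "1/2"] \<open>\<epsilon> > 0\<close> \<open>k > 0\<close> by auto
    then have "2 * (1/2)^n < k * \<epsilon>" by (simp add: field_simps)
    then have "k * dist w w' < k * \<epsilon>" if "w \<in> T n" "w' \<in> T n" for w w'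
      using T_diam[OF that] by linarith
    then show ?thesis using \<open>k > 0\<close> by auto
  qed
  ultimately obtain z where z: "\<And>n. z \<in> T n"
    using decreasing_closed_nest[of T] T_dec by (metis decseqD)
  show ?thesis
  proof
    show "\<phi> z + k * dist z x0 \<le> \<phi> x0"
      using dist_cone_trans[OF step[of 0]] z[of 0] \<open>k > 0\<close> by (simp add: T_def xs_0)
    show "\<phi> z \<le> \<phi> w + k * dist w z" for w
    proof (rule ccontr)
      assume "\<not> \<phi> z \<le> \<phi> w + k * dist w z"
      then have "w \<in> T n" for n using dist_cone_trans[of \<phi> z] z[of n] \<open>k > 0\<close> by (simp add: T_def)
      then have "k * dist w z \<le> 2 * (1/2)^n" for n using T_diam z by blast
      moreover have "(\<lambda>n. 2 * (1/2::real)^n) \<longlonglongrightarrow> 0"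
        by (intro tendsto_mult_right_zero LIMSEQ_realpow_zero) auto
      ultimately have "k * dist w z \<le> 0" by (blast intro: LIMSEQ_le_const)
      then show False using \<open>\<not> \<phi> z \<le> \<phi> w + k * dist w z\<close> \<open>k > 0\<close> by (simp add: mult_le_0_iff)
    qed
  qed
qed

lemma ekeland_point_norm_derivative_le:
  fixes \<phi> :: "'a::real_normed_vector \<Rightarrow> real"
  assumes der: "(\<phi> has_derivative blinfun_apply D) (at z)"
    and ekeland: "\<And>w. \<phi> z \<le> \<phi> w + k * dist w z" and "k \<ge> 0"
  shows "norm D \<le> k"
proof -
  have lower: "- D h \<le> k * norm h" for h
  proof (rule ccontr)
    assume "\<not> - D h \<le> k * norm h"
    then have "D h + k * norm h < 0" by simp
    define g where "g t = \<phi> (z + t *\<^sub>R h) + t * (k * norm h)" for t :: real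
    have "((\<lambda>t. z + t *\<^sub>R h) has_derivative (\<lambda>t. t *\<^sub>R h)) (at 0)"
      by (auto intro!: derivative_eq_intros)
    moreover have "(\<phi> has_derivative blinfun_apply D) (at (z + 0 *\<^sub>R h))" using der by simp
    ultimately have "((\<lambda>t. \<phi> (z + t *\<^sub>R h)) has_derivative (\<lambda>t. D (t *\<^sub>R h))) (at 0)"
      by (rule has_derivative_compose)
    then have "(g has_derivative (\<lambda>t. t * (D h + k * norm h))) (at 0)"
      unfolding g_def by (auto intro!: derivative_eq_intros simp: blinfun.scaleR_right algebra_simps)
    then have "DERIV g 0 :> D h + k * norm h"
      by (simp add: has_field_derivative_def mult_commute_abs)
    then obtain d where "d > 0" and d: "\<And>t. 0 < t \<Longrightarrow> t < d \<Longrightarrow> g t < g 0"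
      using DERIV_neg_dec_right \<open>D h + k * norm h < 0\<close> by (metis add_0)
    have "g 0 \<le> g (d/2)"
      using ekeland[of "z + (d/2) *\<^sub>R h"] \<open>d > 0\<close> by (simp add: g_def dist_norm mult.left_commute)
    then show False using d[of "d/2"] \<open>d > 0\<close> by simp
  qed
  show ?thesis
  proof (rule norm_blinfun_bound[OF \<open>k \<ge> 0\<close>])
    show "norm (D h) \<le> k * norm h" for h
      using lower[of h] lower[of "-h"] by (simp add: blinfun.minus_right)
  qed
qed

lemma ekeland_approximate_critical_points:
  fixes \<phi> :: "'a::banach \<Rightarrow> real"
  assumes der: "\<And>x. (\<phi> has_derivative blinfun_apply (D x)) (at x)"
    and nonneg: "\<And>x. \<phi> x \<ge> 0" and lim: "(\<lambda>n. \<phi> (x n)) \<longlonglongrightarrow> 0"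
  obtains z where "\<And>n. \<phi> (z n) \<le> \<phi> (x n)" "(\<lambda>n. D (z n)) \<longlonglongrightarrow> 0" "(\<lambda>n. x n - z n) \<longlonglongrightarrow> 0"
proof -
  have cont: "continuous_on UNIV \<phi>"
    using der by (meson continuous_at_imp_continuous_on has_derivative_continuous)
  have bdd: "bdd_below (range \<phi>)" using nonneg by (intro bdd_belowI[of _ 0]) auto
  \<comment> \<open>the slack in the Ekeland step must tend to 0 but dominate the square root of the values\<close>
  define k where "k n = sqrt (\<phi> (x n) + 1 / (real n + 1))" for n
  have k_pos: "k n > 0" for n using nonneg[of "x n"] by (simp add: k_def add_nonneg_pos)
  have "(\<lambda>n. \<phi> (x n) + 1 / (real n + 1)) \<longlonglongrightarrow> 0 + 0"
    using lim LIMSEQ_inverse_real_of_nat_add[of 0] by (intro tendsto_add) (simp_all add: inverse_eq_divide add.commute)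
  then have k_lim: "k \<longlonglongrightarrow> 0" unfolding k_def using tendsto_real_sqrt by fastforce
  have "\<exists>z. \<phi> z + k n * dist z (x n) \<le> \<phi> (x n) \<and> (\<forall>w. \<phi> z \<le> \<phi> w + k n * dist w z)" for n
    using ekeland_variational_principle[OF cont bdd k_pos] by metis
  then obtain z where z_le: "\<And>n. \<phi> (z n) + k n * dist (z n) (x n) \<le> \<phi> (x n)"
    and z_min: "\<And>n w. \<phi> (z n) \<le> \<phi> w + k n * dist w (z n)"
    by metis
  show ?thesis
  proof
    show "\<phi> (z n) \<le> \<phi> (x n)" for n using z_le[of n] k_pos[of n] by (smt (verit) zero_le_dist mult_nonneg_nonneg)
    have "\<forall>n. norm (D (z n)) \<le> k n"
      using ekeland_point_norm_derivative_le[OF der z_min] k_pos by (simp add: less_imp_le)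
    then show "(\<lambda>n. D (z n)) \<longlonglongrightarrow> 0"
      by (rule Lim_null_comparison[OF always_eventually k_lim])
    have "norm (x n - z n) \<le> k n" for n
    proof -
      have "\<phi> (x n) \<le> k n * k n"
        using nonneg[of "x n"] by (simp add: k_def add_nonneg_nonneg)
      then have "k n * dist (z n) (x n) \<le> k n * k n"
        using z_le[of n] nonneg[of "z n"] by linarith
      then show ?thesis using k_pos[of n] by (simp add: dist_norm norm_minus_commute)
    qed
    then show "(\<lambda>n. x n - z n) \<longlonglongrightarrow> 0"
      by (intro Lim_null_comparison[OF always_eventually k_lim]) simp
  qed
qed

definition sequentially_proper :: "('a::topological_space \<Rightarrow> 'b::topological_space) \<Rightarrow> bool" where
  "sequentially_proper f \<longleftrightarrow>
    (\<forall>x y. (\<lambda>n. f (x n)) \<longlonglongrightarrow> y \<longrightarrow> (\<exists>r. strict_mono r \<and> convergent (x \<circ> r)))"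

lemma sequentially_proper_if_palais_smale:
  fixes f :: "'a::banach \<Rightarrow> 'b::real_normed_vector" and \<eta> :: "'b \<Rightarrow> real"
  assumes f_deriv: "\<And>x. (f has_derivative blinfun_apply (f' x)) (at x)"
    and eta_deriv: "\<And>x. (\<eta> has_derivative blinfun_apply (\<eta>' x)) (at x)"
    and eta_nonneg: "\<And>x. \<eta> x \<ge> 0" and eta_0: "\<eta> 0 = 0"
    and palais_smale: "\<And>y. palais_smale (\<lambda>x. \<eta> (f x - y))"
  shows "sequentially_proper f"
  unfolding sequentially_proper_def
proof (intro allI impI)
  fix x :: "nat \<Rightarrow> 'a" and y assume lim: "(\<lambda>n. f (x n)) \<longlonglongrightarrow> y"
  define \<phi> where "\<phi> u = \<eta> (f u - y)" for u
  define D where "D u = \<eta>' (f u - y) o\<^sub>L f' u" for u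
  have \<phi>_deriv: "(\<phi> has_derivative blinfun_apply (D u)) (at u)" for u
  proof -
    have "blinfun_apply (D u) = (\<lambda>h. \<eta>' (f u - y) (f' u h))" by (rule ext) (simp add: D_def)
    then show ?thesis
      using has_derivative_compose[OF has_derivative_diff[OF f_deriv has_derivative_const] eta_deriv]
      unfolding \<phi>_def by simp
  qed
  have "(\<lambda>n. \<eta> (f (x n) - y)) \<longlonglongrightarrow> \<eta> 0"
    using lim eta_deriv[of 0, THEN has_derivative_continuous]
    by (intro isCont_tendsto_compose[of 0 \<eta>]) (simp_all add: LIM_zero)
  then have \<phi>_lim: "(\<lambda>n. \<phi> (x n)) \<longlonglongrightarrow> 0" by (simp add: \<phi>_def eta_0)
  have \<phi>_nonneg: "\<phi> u \<ge> 0" for u by (simp add: \<phi>_def eta_nonneg)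
  obtain z where z_le: "\<And>n. \<phi> (z n) \<le> \<phi> (x n)"
    and D_lim: "(\<lambda>n. D (z n)) \<longlonglongrightarrow> 0" and xz_lim: "(\<lambda>n. x n - z n) \<longlonglongrightarrow> 0"
    using ekeland_approximate_critical_points[OF \<phi>_deriv \<phi>_nonneg \<phi>_lim] by blast
  have "bounded (range (\<lambda>n. \<phi> (z n)))"
  proof -
    obtain B where B: "\<And>n. norm (\<phi> (x n)) \<le> B"
      using convergent_imp_Bseq[OF convergentI[OF \<phi>_lim]] by (auto simp: Bseq_def)
    then have "norm (\<phi> (z n)) \<le> B" for n
      using z_le[of n] \<phi>_nonneg[of "z n"] B[of n] by simp
    then show ?thesis unfolding bounded_iff by blast
  qed
  then obtain r where "strict_mono r" and "convergent (z \<circ> r)"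
    using palais_smale[of y] \<phi>_deriv D_lim unfolding palais_smale_def \<phi>_def by blast
  moreover have "convergent ((\<lambda>n. x n - z n) \<circ> r)"
    using LIMSEQ_subseq_LIMSEQ[OF xz_lim \<open>strict_mono r\<close>] by (rule convergentI)
  ultimately have "convergent (\<lambda>n. (z \<circ> r) n + ((\<lambda>n. x n - z n) \<circ> r) n)"
    by (intro convergent_add)
  then show "\<exists>r. strict_mono r \<and> convergent (x \<circ> r)"
    using \<open>strict_mono r\<close> by (auto simp: o_def)
qed

section \<open>Proper local homeomorphisms are global homeomorphisms\<close>

lemma closed_image_if_sequentially_proper:
  fixes f :: "'a::metric_space \<Rightarrow> 'b::metric_space"
  assumes contf: "continuous_on UNIV f" and proper: "sequentially_proper f" and "closed C"
  shows "closed (f ` C)"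
  unfolding closed_sequential_limits
proof (intro allI impI, elim conjE)
  fix y l assume "\<forall>n. y n \<in> f ` C" and "y \<longlonglongrightarrow> l"
  then have "\<forall>n. \<exists>x. x \<in> C \<and> y n = f x" by blast
  then obtain x where x: "\<And>n. x n \<in> C" and y: "\<And>n. y n = f (x n)" by metis
  then obtain r where "strict_mono r" "convergent (x \<circ> r)"
    using proper \<open>y \<longlonglongrightarrow> l\<close> unfolding sequentially_proper_def by (metis (lifting) ext)
  then obtain p where p: "(x \<circ> r) \<longlonglongrightarrow> p" by (auto simp: convergent_def)
  have "p \<in> C" using closed_sequentially[OF \<open>closed C\<close> _ p] x by simp
  moreover have "isCont f p" using contf by (simp add: continuous_on_eq_continuous_at)
  then have "(\<lambda>n. f ((x \<circ> r) n)) \<longlonglongrightarrow> f p" using p by (rule isCont_tendsto_compose)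
  moreover have "(\<lambda>n. f ((x \<circ> r) n)) \<longlonglongrightarrow> l"
    using LIMSEQ_subseq_LIMSEQ[OF \<open>y \<longlonglongrightarrow> l\<close> \<open>strict_mono r\<close>] by (simp add: y o_def)
  ultimately show "l \<in> f ` C" using LIMSEQ_unique by blast
qed

lemma surj_if_sequentially_proper_local_homeomorphism:
  fixes f :: "'a::metric_space \<Rightarrow> 'b::real_normed_vector"
  assumes contf: "continuous_on UNIV f" and "local_homeomorphism f" and "sequentially_proper f"
  shows "surj f"
proof -
  have "open (range f)"
    unfolding open_subopen[of "range f"]
  proof
    fix y assume "y \<in> range f"
    then obtain x where "y = f x" by blast
    obtain U V g where "x \<in> U" "open V" "homeomorphism U V f g"
      using \<open>local_homeomorphism f\<close> unfolding local_homeomorphism_def by (meson zero_less_one)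
    then show "\<exists>T. open T \<and> y \<in> T \<and> T \<subseteq> range f"
      using \<open>y = f x\<close> unfolding homeomorphism_def by blast
  qed
  moreover have "closed (range f)"
    using closed_image_if_sequentially_proper[OF contf \<open>sequentially_proper f\<close> closed_UNIV] .
  ultimately show ?thesis using clopen[of "range f"] by blast
qed

lemma finite_fibre_if_sequentially_proper_local_homeomorphism:
  fixes f :: "'a::metric_space \<Rightarrow> 'b::metric_space"
  assumes contf: "continuous_on UNIV f" and hom: "local_homeomorphism f"
    and proper: "sequentially_proper f"
  shows "finite (f -` {y})"
proof -
  let ?F = "f -` {y}"
  have "closed ?F"
    using contf by (intro continuous_closed_vimage) (auto simp: continuous_on_eq_continuous_at)
  have "compact ?F" unfolding compact_eq_seq_compact_metric
  proof (rule seq_compactI)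
    fix x :: "nat \<Rightarrow> 'a" assume x: "\<forall>n. x n \<in> ?F"
    then have "(\<lambda>n. f (x n)) \<longlonglongrightarrow> y" by simp
    then obtain r where "strict_mono r" "convergent (x \<circ> r)"
      using proper unfolding sequentially_proper_def by blast
    moreover from this obtain p where p: "(x \<circ> r) \<longlonglongrightarrow> p" by (auto simp: convergent_def)
    moreover have "p \<in> ?F" using closed_sequentially[OF \<open>closed ?F\<close> _ p] x by simp
    ultimately show "\<exists>l\<in>?F. \<exists>r. strict_mono r \<and> (x \<circ> r) \<longlonglongrightarrow> l" by blast
  qed
  have "\<exists>U. open U \<and> a \<in> U \<and> inj_on f U" for a
  proof -
    obtain U V g where "open U" "a \<in> U" "homeomorphism U V f g"
      using hom unfolding local_homeomorphism_def by (meson zero_less_one)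
    then show ?thesis by (meson homeomorphism_apply1 inj_on_inverseI)
  qed
  then obtain N where N: "\<And>a. open (N a)" "\<And>a. a \<in> N a" "\<And>a. inj_on f (N a)" by metis
  obtain D where D: "D \<subseteq> ?F" "finite D" "?F \<subseteq> (\<Union>d\<in>D. N d)"
  proof (rule compactE_image[OF \<open>compact ?F\<close>, where f = N and C = ?F])
    show "?F \<subseteq> (\<Union>a\<in>?F. N a)" using N(2) by blast
  qed (use N(1) in auto)
  \<comment> \<open>f is injective on each N d, so N d meets the fibre only in d\<close>
  have "?F \<subseteq> D"
  proof
    fix a assume a: "a \<in> ?F"
    then obtain d where "d \<in> D" "a \<in> N d" using D(3) by blast
    moreover have "f a = f d" using a \<open>d \<in> D\<close> D(1) by auto
    ultimately show "a \<in> D" using N(2,3)[of d] inj_onD by metis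
  qed
  then show ?thesis using D(2) finite_subset by blast
qed

lemma finite_imp_disjoint_balls:
  fixes F :: "'a::metric_space set"
  assumes "finite F"
  obtains r where "r > 0" "\<And>a b. a \<in> F \<Longrightarrow> b \<in> F \<Longrightarrow> a \<noteq> b \<Longrightarrow> ball a r \<inter> ball b r = {}"
proof -
  define P where "P = {(a, b). a \<in> F \<and> b \<in> F \<and> a \<noteq> b}"
  have "finite P" unfolding P_def
    by (rule finite_subset[of _ "F \<times> F"]) (use assms in auto)
  define r where "r = Min (insert 1 ((\<lambda>(a, b). dist a b / 2) ` P))"
  have "r > 0" unfolding r_def using \<open>finite P\<close> by (subst Min_gr_iff) (auto simp: P_def)
  moreover have "ball a r \<inter> ball b r = {}" if "a \<in> F" "b \<in> F" "a \<noteq> b" for a b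
  proof -
    have "(a, b) \<in> P" using that by (simp add: P_def)
    then have "r \<le> dist a b / 2" unfolding r_def using \<open>finite P\<close> by (intro Min_le) force+
    show ?thesis
    proof (rule equals0I)
      fix x assume "x \<in> ball a r \<inter> ball b r"
      then have "dist a b < 2 * r" using dist_triangle3[of a b x] by (simp add: dist_commute)
      then show False using \<open>r \<le> dist a b / 2\<close> by simp
    qed
  qed
  ultimately show ?thesis using that by blast
qed

lemma evenly_covered_neighbourhood:
  fixes f :: "'a::metric_space \<Rightarrow> 'b::metric_space"
  assumes contf: "continuous_on UNIV f"
    and closed_map: "\<And>C. closed C \<Longrightarrow> closed (f ` C)"
    and fin: "finite (f -` {y})"
    and U: "\<And>a. a \<in> f -` {y} \<Longrightarrow> open (U a) \<and> a \<in> U a \<and> open (V a) \<and> homeomorphism (U a) (V a) f (G a)"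
  obtains T where "y \<in> T" "open T" "f -` T \<subseteq> (\<Union>a \<in> f -` {y}. U a)"
    "\<And>a. a \<in> f -` {y} \<Longrightarrow> homeomorphism (U a \<inter> f -` T) T f (G a)"
proof -
  let ?F = "f -` {y}"
  define C where "C = - (\<Union>a \<in> ?F. U a)"
  \<comment> \<open>away from the image of the closed set C, every preimage lies in one of the sheets U a\<close>
  define T where "T = (\<Inter>a \<in> ?F. V a) - f ` C"
  have "closed C" unfolding C_def using U by (intro closed_Compl open_UN) auto
  then have "open T" unfolding T_def using closed_map fin U by (intro open_Diff open_INT) auto
  moreover have "y \<in> T"
  proof -
    have "y \<in> V a" if "a \<in> ?F" for a
      using U[OF that] that unfolding homeomorphism_def by force
    moreover have "y \<notin> f ` C" using U by (force simp: C_def)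
    ultimately show ?thesis by (simp add: T_def)
  qed
  moreover have "f -` T \<subseteq> (\<Union>a \<in> ?F. U a)" by (auto simp: T_def C_def)
  moreover have "homeomorphism (U a \<inter> f -` T) T f (G a)" if "a \<in> ?F" for a
  proof (rule homeomorphism_of_subsets[OF conjunct2[OF conjunct2[OF conjunct2[OF U[OF that]]]]])
    have hom: "homeomorphism (U a) (V a) f (G a)" using U[OF that] by blast
    show "T \<subseteq> V a" using that by (auto simp: T_def)
    show "f ` (U a \<inter> f -` T) = T"
    proof
      show "T \<subseteq> f ` (U a \<inter> f -` T)"
      proof
        fix t assume "t \<in> T"
        then have "G a t \<in> U a" "f (G a t) = t"
          using hom \<open>T \<subseteq> V a\<close> unfolding homeomorphism_def by blast+
        then show "t \<in> f ` (U a \<inter> f -` T)" using \<open>t \<in> T\<close> by (metis IntI image_eqI vimageI)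
      qed
    qed auto
  qed auto
  ultimately show ?thesis using that by blast
qed

lemma covering_space_if_sequentially_proper_local_homeomorphism:
  fixes f :: "'a::metric_space \<Rightarrow> 'b::real_normed_vector"
  assumes contf: "continuous_on UNIV f" and hom: "local_homeomorphism f"
    and proper: "sequentially_proper f"
  shows "covering_space UNIV f UNIV"
proof
  show "continuous_on UNIV f" by (rule contf)
  show "f ` UNIV = UNIV"
    using surj_if_sequentially_proper_local_homeomorphism[OF contf hom proper] .
  fix y :: 'b
  let ?F = "f -` {y}"
  have fin: "finite ?F"
    by (rule finite_fibre_if_sequentially_proper_local_homeomorphism[OF contf hom proper])
  then obtain r where "r > 0" and r: "\<And>a b. a \<in> ?F \<Longrightarrow> b \<in> ?F \<Longrightarrow> a \<noteq> b \<Longrightarrow> ball a r \<inter> ball b r = {}"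
    using finite_imp_disjoint_balls by blast
  have "\<forall>a. \<exists>U V G. open U \<and> a \<in> U \<and> U \<subseteq> ball a r \<and> open V \<and> homeomorphism U V f G"
    using hom \<open>r > 0\<close> unfolding local_homeomorphism_def by blast
  then obtain U V G where UVG: "\<And>a. open (U a) \<and> a \<in> U a \<and> open (V a) \<and> homeomorphism (U a) (V a) f (G a)"
    and U_ball: "\<And>a. U a \<subseteq> ball a r"
    by metis
  obtain T where "y \<in> T" "open T" and T_cover: "f -` T \<subseteq> (\<Union>a \<in> ?F. U a)"
    and T_hom: "\<And>a. a \<in> ?F \<Longrightarrow> homeomorphism (U a \<inter> f -` T) T f (G a)"
    using evenly_covered_neighbourhood[OF contf closed_image_if_sequentially_proper[OF contf proper] fin UVG]
    by blast
  let ?v = "(\<lambda>a. U a \<inter> f -` T) ` ?F"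
  show "\<exists>T. y \<in> T \<and> openin (top_of_set UNIV) T \<and>
      (\<exists>v. \<Union>v = UNIV \<inter> f -` T \<and> (\<forall>u \<in> v. openin (top_of_set UNIV) u) \<and>
           pairwise disjnt v \<and> (\<forall>u \<in> v. \<exists>q. homeomorphism u T f q))"
  proof (intro exI[of _ T] conjI exI[of _ ?v])
    show "pairwise disjnt ?v"
      using r U_ball unfolding pairwise_def disjnt_def by fast
    show "\<Union>?v = UNIV \<inter> f -` T" using T_cover by auto
    show "\<forall>u \<in> ?v. openin (top_of_set UNIV) u"
      using UVG \<open>open T\<close> contf by (auto simp: open_vimage)
    show "\<forall>u \<in> ?v. \<exists>q. homeomorphism u T f q" using T_hom by blast
  qed (use \<open>y \<in> T\<close> \<open>open T\<close> in auto)
qed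

lemma covering_space_UNIV_inverse:
  fixes f :: "'a::real_normed_vector \<Rightarrow> 'b::real_normed_vector"
  assumes cov: "covering_space UNIV f UNIV"
  obtains g where "continuous_on UNIV g" "\<And>y. f (g y) = y" "\<And>x. g (f x) = x"
proof -
  fix x0 :: 'a
  \<comment> \<open>lift the identity of the simply connected base through the covering\<close>
  obtain g where g: "continuous_on UNIV g" "g (f x0) = x0" and fg: "\<And>y. y \<in> UNIV \<Longrightarrow> f (g y) = id y"
    by (rule covering_space_lift_strong[OF cov UNIV_I UNIV_I convex_imp_simply_connected[OF convex_UNIV]
        locally_path_connected_UNIV continuous_on_id, where a = x0 and z = "f x0"]) simp_all
  have fg': "f (g y) = y" for y using fg by simp
  have cont_f: "continuous_on UNIV f" by (rule covering_space_imp_continuous[OF cov])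
  have "(g \<circ> f) x = id x" for x
  proof (rule covering_space_lift_unique[OF cov, where T = UNIV and a = x0 and ?g1.0 = "g \<circ> f" and ?g2.0 = id and f = f])
    show "continuous_on UNIV (g \<circ> f)"
      using continuous_on_compose[OF cont_f continuous_on_subset[OF g(1)]] by simp
  qed (simp_all add: g(2) fg' cont_f connected_UNIV)
  then have "g (f x) = x" for x by simp
  then show ?thesis using that g(1) fg' by blast
qed

theorem theorem5:
  fixes f :: "'a::banach \<Rightarrow> 'b::banach"
    and f' :: "'a \<Rightarrow> ('a \<Rightarrow>\<^sub>L 'b)"
    and \<eta> :: "'b \<Rightarrow> real"
    and \<eta>' :: "'b \<Rightarrow> ('b \<Rightarrow>\<^sub>L real)"
  assumes f_deriv: "\<And>x. (f has_derivative blinfun_apply (f' x)) (at x)"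
    and f'_cont: "continuous_on UNIV f'"
    and eta_deriv: "\<And>x. (\<eta> has_derivative blinfun_apply (\<eta>' x)) (at x)"
    and eta'_cont: "continuous_on UNIV \<eta>'"
    and eta_nonneg: "\<And>x. \<eta> x \<ge> 0"
    and c1: "\<And>x. \<eta> x = 0 \<longleftrightarrow> x = 0" "\<And>x. \<eta>' x = 0 \<longleftrightarrow> x = 0"
    and c2: "\<And>y. palais_smale (\<lambda>x. \<eta> (f x - y))"
    and c3: "\<And>x. range (blinfun_apply (f' x)) = UNIV"
            "\<And>x. \<exists>a>0. \<forall>h. norm (f' x h) \<ge> a * norm h"
    and c4: "\<exists>\<alpha>>0. \<exists>c>0. \<exists>M>0. \<forall>x. norm x \<le> M \<longrightarrow> \<eta> x \<ge> c * norm x powr \<alpha>"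
  shows "diffeomorphism f"
proof -
  have "\<exists>L :: 'b \<Rightarrow>\<^sub>L 'a. (\<forall>h. L (f' x h) = h) \<and> (\<forall>k. f' x (L k) = k)" for x
    using c3(2)[of x] blinfun_inverse_of_bounded_below[OF c3(1)[of x]] by metis
  then obtain L :: "'a \<Rightarrow> ('b \<Rightarrow>\<^sub>L 'a)" where LA: "\<And>x h. L x (f' x h) = h" and AL: "\<And>x k. f' x (L x k) = k"
    by metis
  have f_cont: "continuous_on UNIV f"
    using f_deriv by (meson continuous_at_imp_continuous_on has_derivative_continuous)
  have "local_homeomorphism f"
    using local_homeomorphism_if_invertible_derivative[OF f_deriv f'_cont] LA AL by blast
  moreover have "sequentially_proper f"
    using sequentially_proper_if_palais_smale[OF f_deriv eta_deriv eta_nonneg _ c2] c1(1) by blast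
  ultimately obtain g where g_cont: "continuous_on UNIV g" and fg: "\<And>y. f (g y) = y" and gf: "\<And>x. g (f x) = x"
    using covering_space_UNIV_inverse covering_space_if_sequentially_proper_local_homeomorphism[OF f_cont]
    by metis
  have "C1_map g" by (rule C1_map_inverse[OF f_deriv f'_cont LA AL g_cont fg])
  moreover have "bij f" by (rule o_bij[of g]) (simp_all add: fun_eq_iff fg gf)
  moreover have "inv f = g" by (rule inv_equality) (simp_all add: fg gf)
  moreover have "C1_map f" unfolding C1_map_def using f_deriv f'_cont by blast
  ultimately show ?thesis unfolding diffeomorphism_def by simp
qed

end
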